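(* For every even integer $s_x\ge 0$, $k^*(s_x,2)=2\,k^*(s_x,0)$.
   Context: For integers $a\le b$, $[a,b]$ denotes $\{a,\dots,b\}$. A planar additive basis for $R=[0,s_x]\times[0,s_y]$ is a set $A$ of points with non-negative integer coordinates with $A+A\supseteq R$ ($A+A$ the vector sumset, summands may coincide). For even $s_x,s_y$, a basis is restricted if $A\subseteq[0,s_x/2]\times[0,s_y/2]$. $k^*(s_x,s_y)$ denotes the minimum cardinality of a restricted planar additive basis for $[0,s_x]\times[0,s_y]$; in particular $k^*(s_x,0)$ is the minimum size of a set $E\subseteq[0,s_x/2]$ of integers with $E+E\supseteq[0,s_x]$. *)

theory Defs
  imports Main
begin

definition sumset2 :: "(nat \<times> nat) set \<Rightarrow> (nat \<times> nat) set" where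
  "sumset2 A = {(fst a + fst b, snd a + snd b) | a b. a \<in> A \<and> b \<in> A}"

definition restricted_basis :: "nat \<Rightarrow> nat \<Rightarrow> (nat \<times> nat) set \<Rightarrow> bool" where
  "restricted_basis sx sy A \<longleftrightarrow>
     A \<subseteq> {0..sx div 2} \<times> {0..sy div 2} \<and>
     {0..sx} \<times> {0..sy} \<subseteq> sumset2 A"

definition kstar :: "nat \<Rightarrow> nat \<Rightarrow> nat" where
  "kstar sx sy = (LEAST k. \<exists>A. restricted_basis sx sy A \<and> card A = k)"

end

theory Submission
  imports Defs
begin

text \<open>A restricted basis of height 2 lives in the two rows y = 0 and y = 1. The row y = 0 alone
  covers the row y = 0 of the rectangle, and the row y = 1, shifted down, covers the row y = 2,
  because a point at height 2 can only be the sum of two points at height 1; hence each row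
  has at least k*(s_x,0) points. Conversely, two copies of an optimal one-dimensional
  basis, at heights 0 and 1, form a restricted basis of height 2.\<close>

lemma kstar_le: "restricted_basis sx sy A \<Longrightarrow> kstar sx sy \<le> card A"
  unfolding kstar_def by (rule Least_le) blast

lemma restricted_basis_full:
  assumes "even sx" "even sy"
  shows "restricted_basis sx sy ({0..sx div 2} \<times> {0..sy div 2})"
  unfolding restricted_basis_def
proof (intro conjI subsetI)
  fix p assume "p \<in> {0..sx} \<times> {0..sy}"
  then obtain i j where p: "p = (i, j)" "i \<le> sx" "j \<le> sy" by auto
  define a where "a = min i (sx div 2)"
  define b where "b = min j (sy div 2)"
  have "(a, b) \<in> {0..sx div 2} \<times> {0..sy div 2}" "(i - a, j - b) \<in> {0..sx div 2} \<times> {0..sy div 2}"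
    using p assms by (auto simp: a_def b_def elim!: evenE)
  moreover have "p = (fst (a, b) + fst (i - a, j - b), snd (a, b) + snd (i - a, j - b))"
    using p by (auto simp: a_def b_def)
  ultimately show "p \<in> sumset2 ({0..sx div 2} \<times> {0..sy div 2})"
    unfolding sumset2_def by blast
qed auto

lemma kstar_attained:
  assumes "even sx" "even sy"
  obtains A where "restricted_basis sx sy A" "card A = kstar sx sy"
proof -
  have "\<exists>A. restricted_basis sx sy A \<and> card A = kstar sx sy"
    unfolding kstar_def by (rule LeastI_ex) (use restricted_basis_full[OF assms] in blast)
  then show ?thesis using that by blast
qed

definition row :: "(nat \<times> nat) set \<Rightarrow> nat \<Rightarrow> nat set" where
  "row A j = {x. (x, j) \<in> A}"

lemma restricted_basis_0_iff:
  "restricted_basis sx 0 (E \<times> {0}) \<longleftrightarrow>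
     E \<subseteq> {0..sx div 2} \<and> (\<forall>i\<le>sx. \<exists>a\<in>E. \<exists>b\<in>E. i = a + b)"
proof -
  have "{0..sx} \<times> {0} \<subseteq> sumset2 (E \<times> {0}) \<longleftrightarrow> (\<forall>i\<le>sx. \<exists>a\<in>E. \<exists>b\<in>E. i = a + b)"
    unfolding sumset2_def by fastforce
  then show ?thesis
    unfolding restricted_basis_def by auto
qed

lemma restricted_basis_0_eq_row:
  "restricted_basis sx 0 B \<Longrightarrow> B = row B 0 \<times> {0}"
  unfolding restricted_basis_def row_def by auto

lemma restricted_basis_bottom_row:
  assumes "restricted_basis sx sy A"
  shows "restricted_basis sx 0 (row A 0 \<times> {0})"
  unfolding restricted_basis_0_iff
proof (intro conjI allI impI)
  show "row A 0 \<subseteq> {0..sx div 2}"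
    using assms unfolding restricted_basis_def row_def by auto
next
  fix i assume "i \<le> sx"
  then have "(i, 0) \<in> sumset2 A"
    using assms unfolding restricted_basis_def by auto
  then show "\<exists>a\<in>row A 0. \<exists>b\<in>row A 0. i = a + b"
    unfolding sumset2_def row_def by force
qed

lemma restricted_basis_top_row:
  assumes "even sy" "restricted_basis sx sy A"
  shows "restricted_basis sx 0 (row A (sy div 2) \<times> {0})"
  unfolding restricted_basis_0_iff
proof (intro conjI allI impI)
  have sub: "A \<subseteq> {0..sx div 2} \<times> {0..sy div 2}"
    using assms(2) unfolding restricted_basis_def by simp
  then show "row A (sy div 2) \<subseteq> {0..sx div 2}"
    unfolding row_def by auto
  fix i assume "i \<le> sx"
  then have "(i, sy) \<in> sumset2 A"
    using assms(2) unfolding restricted_basis_def by auto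
  then obtain a b where ab: "a \<in> A" "b \<in> A" "i = fst a + fst b" "sy = snd a + snd b"
    unfolding sumset2_def by auto
  moreover have "snd a = sy div 2" "snd b = sy div 2"
  proof -
    have "snd a \<le> sy div 2" "snd b \<le> sy div 2"
      using ab sub by auto
    with ab(4) assms(1) show "snd a = sy div 2" "snd b = sy div 2"
      by (auto elim!: evenE)
  qed
  ultimately show "\<exists>x\<in>row A (sy div 2). \<exists>y\<in>row A (sy div 2). i = x + y"
    unfolding row_def by (metis mem_Collect_eq prod.collapse)
qed

lemma restricted_basis_two_rows:
  assumes "restricted_basis sx 0 (E \<times> {0})"
  shows "restricted_basis sx 2 (E \<times> {0, 1::nat})"
  unfolding restricted_basis_def
proof (intro conjI subsetI)
  fix p assume "p \<in> E \<times> {0, 1::nat}"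
  then show "p \<in> {0..sx div 2} \<times> {0..2 div 2}"
    using assms unfolding restricted_basis_0_iff by auto
next
  fix p assume "p \<in> {0..sx} \<times> {0..2::nat}"
  then obtain i j where p: "p = (i, j)" "i \<le> sx" "j \<le> 2" by auto
  then obtain a b where ab: "a \<in> E" "b \<in> E" "i = a + b"
    using assms unfolding restricted_basis_0_iff by blast
  define c where "c = min j 1"
  have "(a, c) \<in> E \<times> {0, 1}" "(b, j - c) \<in> E \<times> {0, 1}"
    using ab p by (auto simp: c_def)
  moreover have "p = (fst (a, c) + fst (b, j - c), snd (a, c) + snd (b, j - c))"
    using p ab by (auto simp: c_def)
  ultimately show "p \<in> sumset2 (E \<times> {0, 1::nat})"
    unfolding sumset2_def by blast
qed

lemma finite_row: "finite A \<Longrightarrow> finite (row A j)"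
  unfolding row_def by (rule finite_subset[of _ "fst ` A"]) force+

lemma card_two_rows:
  assumes "finite A" "A \<subseteq> UNIV \<times> {0, 1}"
  shows "card A = card (row A 0) + card (row A 1)"
proof -
  have "A = row A 0 \<times> {0} \<union> row A 1 \<times> {1}"
    using assms(2) unfolding row_def by auto
  moreover have "card (row A 0 \<times> {0::nat} \<union> row A 1 \<times> {1}) = card (row A 0) + card (row A 1)"
    using finite_row[OF assms(1)] by (subst card_Un_disjoint) (auto simp: card_cartesian_product)
  ultimately show ?thesis by simp
qed

theorem mainTheorem3:
  fixes sx :: nat
  assumes "even sx"
  shows "kstar sx 2 = 2 * kstar sx 0"
proof (rule antisym)
  obtain B where B: "restricted_basis sx 0 B" "card B = kstar sx 0"
    using kstar_attained[OF assms, of 0] by auto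
  let ?E = "row B 0"
  have "restricted_basis sx 0 (?E \<times> {0})"
    using B(1) restricted_basis_0_eq_row by auto
  then have "kstar sx 2 \<le> card (?E \<times> {0, 1::nat})"
    by (rule kstar_le[OF restricted_basis_two_rows])
  also have "\<dots> = 2 * card B"
    by (subst restricted_basis_0_eq_row[OF B(1)]) (simp add: card_cartesian_product)
  finally show "kstar sx 2 \<le> 2 * kstar sx 0" using B(2) by simp
next
  obtain A where A: "restricted_basis sx 2 A" "card A = kstar sx 2"
    using kstar_attained[OF assms, of 2] by auto
  have sub: "A \<subseteq> {0..sx div 2} \<times> {0, 1}"
    using A(1) unfolding restricted_basis_def by auto
  then have "card A = card (row A 0) + card (row A 1)"
    by (intro card_two_rows) (auto intro: finite_subset)
  moreover have "kstar sx 0 \<le> card (row A 0)" "kstar sx 0 \<le> card (row A 1)"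
    using kstar_le[OF restricted_basis_bottom_row[OF A(1)]]
      kstar_le[OF restricted_basis_top_row[OF _ A(1)]] by (simp_all add: card_cartesian_product)
  ultimately show "2 * kstar sx 0 \<le> kstar sx 2" using A(2) by simp
qed

end
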